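(* In the setting described in the context, let $n\ge3$ and let $M=\{(0,\dots,0,u):u\in\mathsf k\}\subseteq U$. Assume that for every $\upsilon=(0,\dots,0,u)\in M$ with $u\ne0$, the centralizer of $\upsilon U_{n-3}$ in $U_{n-1}/U_{n-3}$ equals $U_{n-2}/U_{n-3}$. Then (up to a constant factor $c\in\mathsf k^*$ in the added term, which can be normalized to $1$ by rescaling a coordinate) the automorphism of $U_{n-1}/U_{n-3}$ induced by conjugation by $\upsilon=(0,\dots,0,u)$ maps $(\dots,x_{n-2},x_{n-1},0)U_{n-3}\mapsto(\dots,x_{n-2}+u^hx_{n-1}^k,x_{n-1},0)U_{n-3}$, where $h,k$ are powers of $p$ if $\mathrm{char}\,\mathsf k=p>0$, and $h=k=1$ otherwise.
   Context: Let $\mathsf k$ be an algebraically closed field and $G=U\rtimes T$ the semidirect product of an $n$-dimensional connected unipotent algebraic group $U$ by a $1$-dimensional connected torus $T$. Assume $U$ is identified with the affine space $\mathsf k^n$ so that: the subsets $U_i=\{(x_1,\dots,x_n): x_{i+1}=\dots=x_n=0\}$ ($0\le i\le n$) are normal subgroups of $G$; the product is $(x_1,\dots,x_n)(y_1,\dots,y_n)=(x_1+y_1+\psi_1,\ \dots,\ x_{n-1}+y_{n-1}+\psi_{n-1},\ x_n+y_n)$ where $\psi_j\in\mathsf k[x_{j+1},\dots,x_n,y_{j+1},\dots,y_n]$; and each $\tau\in T$ acts on $U$ by the automorphism $(x_1,\dots,x_n)\mapsto(a_\tau^{e_1}x_1+\varphi_1^{(\tau)}(x_2,\dots,x_n),\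 \dots,\ a_\tau^{e_{n-1}}x_{n-1}+\varphi^{(\tau)}_{n-1}(x_n),\ a_\tau^{e_n}x_n)$, where $a_\tau\in\mathsf k^*$ depends bi-regularly on $\tau$, each $\varphi^{(\tau)}_j$ is a morphism, and the $e_j$ are fixed integers. *)

theory Defs
  imports "HOL-Algebra.Group" "HOL-Algebra.Coset" "HOL-Computational_Algebra.Polynomial"
begin

text \<open>Polynomial functions in the variables from V with coefficients in 'a
  (the image of the polynomial ring 'a[V] in the functions (V -> 'a) -> 'a).\<close>
inductive_set poly_fun_on :: "'v set \<Rightarrow> (('v \<Rightarrow> 'a::comm_ring_1) \<Rightarrow> 'a) set"
  for V :: "'v set" where
  const: "(\<lambda>_. c) \<in> poly_fun_on V"
| var: "v \<in> V \<Longrightarrow> (\<lambda>x. x v) \<in> poly_fun_on V"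
| add: "f \<in> poly_fun_on V \<Longrightarrow> g \<in> poly_fun_on V \<Longrightarrow> (\<lambda>x. f x + g x) \<in> poly_fun_on V"
| mul: "f \<in> poly_fun_on V \<Longrightarrow> g \<in> poly_fun_on V \<Longrightarrow> (\<lambda>x. f x * g x) \<in> poly_fun_on V"

text \<open>Points of k^n: functions nat -> k supported in {1..n}; coordinate i is x i.\<close>
definition Uset :: "nat \<Rightarrow> (nat \<Rightarrow> 'a::zero) set" where
  "Uset n = {x. \<forall>i. (i = 0 \<or> n < i) \<longrightarrow> x i = 0}"

definition Usub :: "nat \<Rightarrow> nat \<Rightarrow> (nat \<Rightarrow> 'a::zero) set" where
  "Usub n i = {x \<in> Uset n. \<forall>j. i < j \<longrightarrow> x j = 0}"

definition umult :: "nat \<Rightarrow> (nat \<Rightarrow> (nat \<Rightarrow> 'a) \<Rightarrow> (nat \<Rightarrow> 'a) \<Rightarrow> 'a)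
    \<Rightarrow> (nat \<Rightarrow> 'a::comm_ring_1) \<Rightarrow> (nat \<Rightarrow> 'a) \<Rightarrow> (nat \<Rightarrow> 'a)" where
  "umult n \<psi> x y = (\<lambda>i. if 1 \<le> i \<and> i < n then x i + y i + \<psi> i x y
                         else if i = n then x i + y i else 0)"

definition Ugrp :: "nat \<Rightarrow> (nat \<Rightarrow> (nat \<Rightarrow> 'a) \<Rightarrow> (nat \<Rightarrow> 'a) \<Rightarrow> 'a)
    \<Rightarrow> (nat \<Rightarrow> 'a::comm_ring_1) monoid" where
  "Ugrp n \<psi> = \<lparr>carrier = Uset n, monoid.mult = umult n \<psi>, one = (\<lambda>_. 0)\<rparr>"

text \<open>Action of tau in T = k^* (with a_tau = tau) on U.\<close>
definition Tact :: "nat \<Rightarrow> (nat \<Rightarrow> int) \<Rightarrow> (nat \<Rightarrow> 'a \<Rightarrow> (nat \<Rightarrow> 'a) \<Rightarrow> 'a)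
    \<Rightarrow> 'a::field \<Rightarrow> (nat \<Rightarrow> 'a) \<Rightarrow> (nat \<Rightarrow> 'a)" where
  "Tact n e \<phi> \<tau> x = (\<lambda>i. if 1 \<le> i \<and> i < n then \<tau> powi e i * x i + \<phi> i \<tau> x
                          else if i = n then \<tau> powi e n * x n else 0)"

definition vlast :: "nat \<Rightarrow> 'a::zero \<Rightarrow> (nat \<Rightarrow> 'a)" where
  "vlast n u = (\<lambda>i. if i = n then u else 0)"

end

theory Submission
  imports Defs
begin

(* Conjugation by v = (0,...,0,u) acts on U_{n-1}/U_{n-3}, i.e. on the coordinates
   (x_{n-2}, x_{n-1}), by x_{n-2} |-> x_{n-2} + F(u, x_{n-1}).  We show F(u, b) = c u^h b^k.

   If F(u, b) is additive in b, F(0, b) = 0, F(u, b) = 0 iff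
      b = 0 for u /= 0, and F(u, b) + F(u', b) = F(u + u', b) + D(t, b) with D polynomial and
      D(b, b) = 0, then F(u, b) = c u^h b^k with h, k additive exponents.
   3. In the group U = k^n only the top three coordinates matter.  We compute the product, the
      inverse and conjugation there, and show that the conjugation correction F has all the
      properties of step 2: additivity (conjugation is an automorphism), the cocycle identity
      (v(u) v(u') = v(u + u') Z with Z in U_{n-1}), and F(u, b) = 0 iff b = 0 for u /= 0 (this
      is the centraliser hypothesis). *)

text \<open>An algebraically closed field is infinite: otherwise \<open>1 + \<Prod>\<^sub>a (X - a)\<close>
  would be a non-constant polynomial without roots.\<close>
lemma alg_closed_infinite: "infinite (UNIV :: 'k::alg_closed_field set)"
proof
  assume fin: "finite (UNIV :: 'k set)"
  define q :: "'k poly" where "q = (\<Prod>a\<in>UNIV. [:-a, 1:])"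
  have "degree q = card (UNIV :: 'k set)"
    unfolding q_def by (subst degree_prod_sum_eq) auto
  moreover have "card (UNIV :: 'k set) > 0" using fin by (simp add: card_gt_0_iff)
  ultimately have dpos: "degree q > 0" by simp
  hence "degree (q + 1) > 0" by (simp add: degree_add_eq_left)
  then obtain x where "poly (q + 1) x = 0"
    using alg_closed_imp_poly_has_root by blast
  moreover have "poly q x = 0"
    unfolding q_def poly_prod using fin by (intro prod_zero) auto
  ultimately show False by simp
qed

lemma poly_zero_if_infinite_roots:
  fixes p :: "'k::field poly"
  assumes "infinite S" "\<And>x. x \<in> S \<Longrightarrow> poly p x = 0"
  shows "p = 0"
proof (rule ccontr)
  assume "p \<noteq> 0"
  hence "finite {x. poly p x = 0}" by (rule poly_roots_finite)
  moreover have "S \<subseteq> {x. poly p x = 0}" using assms by auto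
  ultimately show False using assms(1) finite_subset by blast
qed

lemma poly_eq_by_values:
  fixes p q :: "'k::alg_closed_field poly"
  assumes "\<And>x. poly p x = poly q x"
  shows "p = q"
  using poly_zero_if_infinite_roots[OF alg_closed_infinite, of "p - q"] assms by simp

lemma poly_const_if_finite_range:
  fixes p :: "'k::alg_closed_field poly"
  assumes "finite (range (poly p))"
  shows "poly p x = poly p y"
proof -
  have "p - [:v:] = 0" if "infinite (poly p -` {v})" for v
    using poly_zero_if_infinite_roots[OF that, of "p - [:v:]"] by simp
  moreover have "\<exists>v. infinite (poly p -` {v})"
  proof (rule ccontr)
    assume "\<not> ?thesis"
    hence "finite (\<Union>v\<in>range (poly p). poly p -` {v})" using assms by blast
    moreover have "(\<Union>v\<in>range (poly p). poly p -` {v}) = UNIV" by auto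
    ultimately show False using alg_closed_infinite by metis
  qed
  ultimately obtain v where "p = [:v:]" by auto
  thus ?thesis by simp
qed

lemma only_root_zero_imp_monom:
  fixes p :: "'k::alg_closed_field poly"
  assumes "\<And>x. poly p x = 0 \<longleftrightarrow> x = 0"
  shows "\<exists>c r. c \<noteq> 0 \<and> p = monom c r"
proof -
  have "p \<noteq> 0" using assms[of 1] by auto
  then obtain A where A: "p = smult (lead_coeff p) (\<Prod>x\<in>#A. [:-x, 1:])"
    using alg_closed_imp_factorization by blast
  have A0: "x = 0" if "x \<in># A" for x
  proof -
    have "[:-x,1:] dvd (\<Prod>x\<in>#A. [:-x, 1:])"
      using that by (intro dvd_prod_mset) auto
    hence "[:-x,1:] dvd p" by (subst A) (simp add: dvd_smult)
    hence "poly p x = 0" by (simp add: poly_eq_0_iff_dvd)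
    thus ?thesis using assms by simp
  qed
  have "image_mset (\<lambda>x. [:-x, 1:]) A = image_mset (\<lambda>x. [:0, 1:]) A"
    using A0 by (intro image_mset_cong) auto
  hence "p = monom (lead_coeff p) (size A)" using A by (simp add: monom_altdef)
  moreover have "lead_coeff p \<noteq> 0" using \<open>p \<noteq> 0\<close> by simp
  ultimately show ?thesis by blast
qed

lemma frobenius_inj:
  fixes x y :: "'k::field"
  assumes "CHAR('k) > 0" "x ^ CHAR('k) = y ^ CHAR('k)"
  shows "x = y"
proof -
  have p: "prime CHAR('k)" using assms(1) prime_CHAR_semidom by blast
  have "(x - y) ^ CHAR('k) = x ^ CHAR('k) + (- y) ^ CHAR('k)"
    using freshmans_dream[OF p refl, of x "- y"] by simp
  also have "\<dots> = 0" using assms(2) minus_power_prime_CHAR[OF refl p] by simp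
  finally show ?thesis by simp
qed

text \<open>If \<open>x \<mapsto> x\<^sup>r\<close> is additive and \<open>r \<ge> 2\<close>, then the coefficient \<open>r\<close> of \<open>X\<close> in
  \<open>(X + 1)\<^sup>r\<close> must vanish, i.e. the characteristic divides \<open>r\<close>.\<close>
lemma additive_power_char_dvd:
  fixes r :: nat
  assumes "r \<ge> 2" "\<And>x y::'k::alg_closed_field. (x + y) ^ r = x ^ r + y ^ r"
  shows "CHAR('k) dvd r"
proof -
  have "[:1, 1:] ^ r = monom (1::'k) r + 1"
    using assms(2) by (intro poly_eq_by_values) (simp add: poly_monom add.commute)
  hence "coeff ([:1, 1:] ^ r) 1 = coeff (monom (1::'k) r + 1) 1" by simp
  hence "of_nat r = (0::'k)" using assms(1) by (simp add: coeff_linear_poly_power)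
  thus ?thesis by (simp add: of_nat_eq_0_iff_char_dvd)
qed

lemma additive_power:
  assumes "\<And>x y::'k::alg_closed_field. (x + y) ^ r = x ^ r + y ^ r"
  shows "if CHAR('k) > 0 then (\<exists>a. r = CHAR('k) ^ a) else r = 1"
  using assms
proof (induction r rule: less_induct)
  case (less r)
  have "r \<noteq> 0"
  proof
    assume "r = 0"
    hence "(1::'k) + 1 = 1" using less.prems[of 1 1] by (metis power_0)
    thus False by (metis add_cancel_right_right one_neq_zero)
  qed
  show ?case
  proof (cases "r = 1")
    case True
    thus ?thesis by (auto intro: exI[of _ 0])
  next
    case False
    with \<open>r \<noteq> 0\<close> have "r \<ge> 2" by simp
    hence "CHAR('k) dvd r"
      using additive_power_char_dvd[where 'k='k] less.prems by blast
    then obtain r' where r': "r = CHAR('k) * r'" by blast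
    have char_pos: "CHAR('k) > 0"
      using \<open>r \<noteq> 0\<close> r' by (cases "CHAR('k)") auto
    have "CHAR('k) > 1" using prime_gt_1_nat[OF prime_CHAR_semidom[OF char_pos]] .
    hence "r' < r" using \<open>r \<noteq> 0\<close> r' by simp
    moreover have "(x + y) ^ r' = x ^ r' + y ^ r'" for x y :: 'k
    proof (rule frobenius_inj[OF char_pos])
      have pow: "a ^ r = (a ^ r') ^ CHAR('k)" for a :: 'k
        by (simp add: r' mult.commute power_mult)
      have "((x + y) ^ r') ^ CHAR('k) = x ^ r + y ^ r"
        using less.prems[of x y] by (simp add: pow)
      also have "\<dots> = (x ^ r') ^ CHAR('k) + (y ^ r') ^ CHAR('k)" by (simp add: pow)
      also have "\<dots> = (x ^ r' + y ^ r') ^ CHAR('k)"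
        using char_pos prime_CHAR_semidom by (intro freshmans_dream[symmetric]) auto
      finally show "((x + y) ^ r') ^ CHAR('k) = (x ^ r' + y ^ r') ^ CHAR('k)" .
    qed
    ultimately obtain a where "r' = CHAR('k) ^ a" using less.IH char_pos by fastforce
    hence "r = CHAR('k) ^ Suc a" using r' by simp
    thus ?thesis using char_pos by (simp del: power_Suc) blast
  qed
qed

text \<open>Bivariate polynomial functions \<open>(u, b) \<mapsto> Q(u, b)\<close>, with \<open>Q\<close> written as a polynomial
  in \<open>b\<close> whose coefficients are polynomials in \<open>u\<close>.\<close>
definition bipoly :: "('k::comm_ring_1 \<Rightarrow> 'k \<Rightarrow> 'k) set" where
  "bipoly = {f. \<exists>Q::'k poly poly. \<forall>u b. f u b = poly (poly Q [:b:]) u}"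

lemma poly_poly_const_eq_map_poly:
  "poly (poly Q [:b:]) u = poly (map_poly (\<lambda>c. poly c u) Q) (b::'k::comm_ring_1)"
  by (induction Q rule: pCons_induct) (auto simp: map_poly_pCons)

lemma bipoly_slices:
  assumes "f \<in> bipoly"
  obtains C :: "'k::comm_ring_1 \<Rightarrow> 'k poly" and Q :: "'k poly poly"
  where "\<And>u b. f u b = poly (C u) b" "\<And>u j. coeff (C u) j = poly (coeff Q j) u"
proof -
  obtain Q :: "'k poly poly" where Q: "\<And>u b. f u b = poly (poly Q [:b:]) u"
    using assms unfolding bipoly_def by blast
  show ?thesis
    by (rule that[of "\<lambda>u. map_poly (\<lambda>c. poly c u) Q" Q])
       (simp_all add: Q poly_poly_const_eq_map_poly coeff_map_poly)
qed

lemma bipoly_const: "(\<lambda>u b. c) \<in> bipoly"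
  unfolding bipoly_def by (intro CollectI exI[of _ "[:[:c:]:]"]) simp

lemma bipoly_fst: "(\<lambda>u b. u) \<in> bipoly"
  unfolding bipoly_def by (intro CollectI exI[of _ "[:[:0, 1:]:]"]) simp

lemma bipoly_snd: "(\<lambda>u b. b) \<in> bipoly"
  unfolding bipoly_def by (intro CollectI exI[of _ "[:0, 1:]"]) simp

lemma bipoly_add:
  assumes "f \<in> bipoly" "g \<in> bipoly"
  shows "(\<lambda>u b. f u b + g u b) \<in> bipoly"
proof -
  obtain Q1 Q2 where "\<forall>u b. f u b = poly (poly Q1 [:b:]) u" "\<forall>u b. g u b = poly (poly Q2 [:b:]) u"
    using assms unfolding bipoly_def by blast
  thus ?thesis unfolding bipoly_def by (intro CollectI exI[of _ "Q1 + Q2"]) simp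
qed

lemma bipoly_mult:
  assumes "f \<in> bipoly" "g \<in> bipoly"
  shows "(\<lambda>u b. f u b * g u b) \<in> bipoly"
proof -
  obtain Q1 Q2 where "\<forall>u b. f u b = poly (poly Q1 [:b:]) u" "\<forall>u b. g u b = poly (poly Q2 [:b:]) u"
    using assms unfolding bipoly_def by blast
  thus ?thesis unfolding bipoly_def by (intro CollectI exI[of _ "Q1 * Q2"]) simp
qed

lemma bipoly_uminus:
  assumes "f \<in> bipoly"
  shows "(\<lambda>u b. - f u b) \<in> bipoly"
proof -
  obtain Q where "\<forall>u b. f u b = poly (poly Q [:b:]) u"
    using assms unfolding bipoly_def by blast
  thus ?thesis unfolding bipoly_def by (intro CollectI exI[of _ "- Q"]) simp
qed

lemma bipoly_diff: "f \<in> bipoly \<Longrightarrow> g \<in> bipoly \<Longrightarrow> (\<lambda>u b. f u b - g u b) \<in> bipoly"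
  using bipoly_add[of f "\<lambda>u b. - g u b"] bipoly_uminus[of g] by simp

lemma bipoly_subst:
  assumes "P \<in> poly_fun_on V" "\<And>v. \<sigma> v \<in> bipoly"
  shows "(\<lambda>u b. P (\<lambda>v. \<sigma> v u b)) \<in> bipoly"
  using assms(1)
proof induction
  case (const c) show ?case by (rule bipoly_const)
next
  case (var v) show ?case using assms(2)[of v] by simp
next
  case (add f g) thus ?case using bipoly_add by fast
next
  case (mul f g) thus ?case using bipoly_mult by fast
qed

lemma poly_fun_on_cong:
  assumes "P \<in> poly_fun_on V" "\<forall>v\<in>V. f v = g v"
  shows "P f = P g"
  using assms(1) by induction (use assms(2) in auto)

lemma bipoly_monomial_in_snd:
  fixes F :: "'k::alg_closed_field \<Rightarrow> 'k \<Rightarrow> 'k"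
  assumes F: "F \<in> bipoly" and roots: "\<And>u b. u \<noteq> 0 \<Longrightarrow> F u b = 0 \<longleftrightarrow> b = 0"
  shows "\<exists>A q. \<forall>u b. F u b = poly A u * b ^ q"
proof -
  obtain C Q where FC: "\<And>u b. F u b = poly (C u) b"
    and cC: "\<And>u j. coeff (C u) j = poly (coeff Q j) u"
    using bipoly_slices[OF F] by blast
  have single: "poly (coeff Q j) u = 0"
    if "u \<noteq> 0" "poly (coeff Q i) u \<noteq> 0" "j \<noteq> i" for u i j
  proof -
    have "poly (C u) b = 0 \<longleftrightarrow> b = 0" for b using roots[OF that(1)] FC by simp
    then obtain c r where "C u = monom c r" using only_root_zero_imp_monom by blast
    thus ?thesis using that cC[of u i] cC[of u j] by (auto split: if_splits)
  qed
  have "C 1 \<noteq> 0" using roots[of 1 1] FC by auto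
  then obtain q where q: "poly (coeff Q q) 1 \<noteq> 0"
    using cC[of 1] by (metis leading_coeff_0_iff)
  have Qj: "coeff Q j = 0" if "j \<noteq> q" for j
  proof (rule ccontr)
    assume "coeff Q j \<noteq> 0"
    moreover have "coeff Q q \<noteq> 0" using q by auto
    ultimately have "coeff Q j * coeff Q q * [:0, 1:] \<noteq> 0" by simp
    then obtain u where "poly (coeff Q j * coeff Q q * [:0, 1:]) u \<noteq> 0"
      using poly_zero_if_infinite_roots[OF alg_closed_infinite] by blast
    hence "u \<noteq> 0" "poly (coeff Q j) u \<noteq> 0" "poly (coeff Q q) u \<noteq> 0" by auto
    thus False using single that by blast
  qed
  have "C u = monom (poly (coeff Q q) u) q" for u
    by (rule poly_eqI) (auto simp: cC Qj)
  hence "\<forall>u b. F u b = poly (coeff Q q) u * b ^ q" by (simp add: FC poly_monom)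
  thus ?thesis by blast
qed

text \<open>If \<open>z\<close> takes infinitely many values, \<open>D(t, b) = d(t) b\<^sup>q\<close>
  identically and the diagonal forces \<open>d = 0\<close>; otherwise \<open>u \<mapsto> u\<^sup>m + u'\<^sup>m - (u + u')\<^sup>m\<close> has
  finite range and is therefore constant.\<close>
lemma bipoly_cocycle_imp_additive_power:
  fixes D :: "'k::alg_closed_field \<Rightarrow> 'k \<Rightarrow> 'k" and x y :: 'k
  assumes D: "D \<in> bipoly" and diag: "\<And>b. D b b = 0" and c: "c \<noteq> 0" and m: "m \<noteq> 0"
    and cocycle: "\<And>u u' b. D (z u u') b = c * (u ^ m + u' ^ m - (u + u') ^ m) * b ^ q"
  shows "(x + y) ^ m = x ^ m + y ^ m"
proof -
  define E where "E u u' = u ^ m + u' ^ m - (u + u') ^ m" for u u' :: 'k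
  obtain C Q where DC: "\<And>t b. D t b = poly (C t) b"
    and cC: "\<And>t j. coeff (C t) j = poly (coeff Q j) t"
    using bipoly_slices[OF D] by blast
  have "C (z u u') = monom (c * E u u') q" for u u'
    by (rule poly_eq_by_values) (simp add: DC[symmetric] cocycle poly_monom E_def)
  hence cz: "poly (coeff Q j) (z u u') = (if j = q then c * E u u' else 0)" for j u u'
    using cC by (metis coeff_monom)
  have "E x y = 0"
  proof (cases "finite (range (case_prod z))")
    case False
    have "coeff Q j = 0" if "j \<noteq> q" for j
      by (rule poly_zero_if_infinite_roots[OF False]) (use cz that in auto)
    hence "C t = monom (poly (coeff Q q) t) q" for t
      by (intro poly_eqI) (auto simp: cC)
    hence "poly (coeff Q q) b * b ^ q = 0" for b
      using diag[of b] DC by (simp add: poly_monom)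
    hence "coeff Q q = 0"
      using alg_closed_infinite by (intro poly_zero_if_infinite_roots[of "UNIV - {0}"]) auto
    thus ?thesis using cz[of q x y] c by simp
  next
    case True
    define e where "e = monom 1 m + [:y ^ m:] - [:y, 1:] ^ m"
    have e: "poly e t = E t y" for t
      by (simp add: e_def E_def poly_monom add.commute)
    have "range (poly e) \<subseteq> (\<lambda>v. v / c) ` poly (coeff Q q) ` range (case_prod z)"
    proof
      fix w assume "w \<in> range (poly e)"
      then obtain t where "w = E t y" using e by auto
      hence "w = poly (coeff Q q) (case_prod z (t, y)) / c" using cz[of q t y] c by simp
      thus "w \<in> (\<lambda>v. v / c) ` poly (coeff Q q) ` range (case_prod z)" by blast
    qed
    hence "finite (range (poly e))" using True finite_subset by blast
    hence "poly e x = poly e 0" by (rule poly_const_if_finite_range)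
    thus ?thesis using e m by (simp add: E_def)
  qed
  thus ?thesis by (simp add: E_def)
qed

lemma bipoly_additive_form:
  fixes F D :: "'k::alg_closed_field \<Rightarrow> 'k \<Rightarrow> 'k"
  assumes F: "F \<in> bipoly" and D: "D \<in> bipoly"
    and F_add: "\<And>u b b'. F u (b + b') = F u b + F u b'"
    and F_roots: "\<And>u b. u \<noteq> 0 \<Longrightarrow> F u b = 0 \<longleftrightarrow> b = 0"
    and F_zero: "\<And>b. F 0 b = 0"
    and cocycle: "\<And>u u'. \<exists>t. \<forall>b. F u b + F u' b = F (u + u') b + D t b"
    and diag: "\<And>b. D b b = 0"
  shows "\<exists>c h k. c \<noteq> 0 \<and>
           (if CHAR('k) > 0 then (\<exists>a. h = CHAR('k) ^ a) \<and> (\<exists>a. k = CHAR('k) ^ a)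
            else h = 1 \<and> k = 1) \<and>
           (\<forall>u b. F u b = c * u ^ h * b ^ k)"
proof -
  obtain A q where FA: "\<And>u b. F u b = poly A u * b ^ q"
    using bipoly_monomial_in_snd[OF F F_roots] by blast
  have "poly A u = 0 \<longleftrightarrow> u = 0" for u
    using F_roots[of u 1] F_zero[of 1] FA[of u 1] FA[of 0 1] by (cases "u = 0") auto
  then obtain c m where c: "c \<noteq> 0" and "A = monom c m"
    using only_root_zero_imp_monom by blast
  hence Fcm: "F u b = c * u ^ m * b ^ q" for u b by (simp add: FA poly_monom)
  have "(x + y) ^ q = x ^ q + y ^ q" for x y :: 'k
    using F_add[of 1 x y] c by (simp add: Fcm distrib_left[symmetric])
  hence q: "if CHAR('k) > 0 then (\<exists>a. q = CHAR('k) ^ a) else q = 1"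
    by (rule additive_power)
  have "m \<noteq> 0" using F_zero[of 1] Fcm[of 0 1] c by (cases m) auto
  obtain z where z: "\<And>u u' b. F u b + F u' b = F (u + u') b + D (z u u') b"
    using cocycle by metis
  have "D (z u u') b = c * (u ^ m + u' ^ m - (u + u') ^ m) * b ^ q" for u u' b
    using z[where u=u and u'=u' and b=b] by (simp add: Fcm algebra_simps)
  hence "(x + y) ^ m = x ^ m + y ^ m" for x y :: 'k
    using bipoly_cocycle_imp_additive_power[OF D diag c \<open>m \<noteq> 0\<close>] by blast
  hence m: "if CHAR('k) > 0 then (\<exists>a. m = CHAR('k) ^ a) else m = 1"
    by (rule additive_power)
  show ?thesis
    using c q m Fcm by (intro exI[of _ c] exI[of _ m] exI[of _ q]) (auto split: if_splits)
qed

lemma (in group) conj_mult: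
  assumes "x \<in> carrier G" "a \<in> carrier G" "b \<in> carrier G"
  shows "x \<otimes> (a \<otimes> b) \<otimes> inv x = (x \<otimes> a \<otimes> inv x) \<otimes> (x \<otimes> b \<otimes> inv x)"
proof -
  have cancel: "inv x \<otimes> (x \<otimes> c) = c" if "c \<in> carrier G" for c
    using assms that by (simp add: m_assoc[symmetric] l_inv)
  have "(x \<otimes> a \<otimes> inv x) \<otimes> (x \<otimes> b \<otimes> inv x) = x \<otimes> a \<otimes> (inv x \<otimes> x) \<otimes> b \<otimes> inv x"
    using assms by (simp add: m_assoc cancel)
  also have "\<dots> = x \<otimes> (a \<otimes> b) \<otimes> inv x" using assms by (simp add: l_inv) (simp add: m_assoc)
  finally show ?thesis by simp
qed

lemma (in group) conj_comp:
  assumes "x \<in> carrier G" "y \<in> carrier G" "g \<in> carrier G"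
  shows "x \<otimes> y \<otimes> g \<otimes> inv (x \<otimes> y) = x \<otimes> (y \<otimes> g \<otimes> inv y) \<otimes> inv x"
  using assms by (simp add: inv_mult_group m_assoc)

text \<open>Only the top three coordinates \<open>n - 2, n - 1, n\<close> matter.\<close>
locale unipotent_coords =
  fixes n :: nat and \<psi> :: "nat \<Rightarrow> (nat \<Rightarrow> 'k::alg_closed_field) \<Rightarrow> (nat \<Rightarrow> 'k) \<Rightarrow> 'k"
  assumes n3: "n \<ge> 3"
    and psi_poly: "\<forall>j. 1 \<le> j \<and> j < n \<longrightarrow>
        (\<exists>P \<in> poly_fun_on (Inl ` {j<..n} \<union> Inr ` {j<..n}).
           \<forall>x y. \<psi> j x y = P (case_sum x y))"
    and grp: "group (Ugrp n \<psi>)"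
begin

abbreviation "G \<equiv> Ugrp n \<psi>"

sublocale gr: group G by (rule grp)

lemma carrier_G [simp]: "carrier G = Uset n" by (simp add: Ugrp_def)
lemma mult_G: "x \<otimes>\<^bsub>G\<^esub> y = umult n \<psi> x y" by (simp add: Ugrp_def)
lemma one_G [simp]: "\<one>\<^bsub>G\<^esub> = (\<lambda>_. 0)" by (simp add: Ugrp_def)

lemma mult_closed [simp]: "x \<in> Uset n \<Longrightarrow> y \<in> Uset n \<Longrightarrow> x \<otimes>\<^bsub>G\<^esub> y \<in> Uset n"
  using gr.m_closed by simp

lemma inv_closed [simp]: "x \<in> Uset n \<Longrightarrow> inv\<^bsub>G\<^esub> x \<in> Uset n"
  using gr.inv_closed by simp

definition elem3 :: "'k \<Rightarrow> 'k \<Rightarrow> 'k \<Rightarrow> nat \<Rightarrow> 'k" where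
  "elem3 a b t = (\<lambda>i. if i = n - 2 then a else if i = n - 1 then b else if i = n then t else 0)"

lemma elem3_coords [simp]:
  "elem3 a b t (n - 2) = a" "elem3 a b t (n - 1) = b" "elem3 a b t n = t"
  "elem3 a b t (n - Suc 0) = b"
  using n3 by (auto simp: elem3_def)

lemma elem3_carrier [simp]: "elem3 a b t \<in> Uset n"
  using n3 by (auto simp: elem3_def Uset_def)

lemma elem3_zero: "elem3 0 0 0 = (\<lambda>_. 0)" by (auto simp: elem3_def)

lemma zero_Uset [simp]: "(\<lambda>_. 0) \<in> Uset n" by (simp add: Uset_def)

lemma vlast_elem3: "vlast n u = elem3 0 0 u"
  unfolding vlast_def elem3_def using n3 by (intro ext) auto

text \<open>The correction terms of the product in the coordinates \<open>n - 1\<close> and \<open>n - 2\<close>,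
  as functions of the relevant coordinates only.\<close>
definition \<gamma> :: "'k \<Rightarrow> 'k \<Rightarrow> 'k" where "\<gamma> s t = \<psi> (n - 1) (elem3 0 0 s) (elem3 0 0 t)"
definition \<beta> :: "'k \<Rightarrow> 'k \<Rightarrow> 'k \<Rightarrow> 'k \<Rightarrow> 'k" where
  "\<beta> b s b' t = \<psi> (n - 2) (elem3 0 b s) (elem3 0 b' t)"

lemma psi_cong:
  assumes "1 \<le> j" "j < n" "\<And>i. j < i \<Longrightarrow> i \<le> n \<Longrightarrow> x i = x' i \<and> y i = y' i"
  shows "\<psi> j x y = \<psi> j x' y'"
proof -
  obtain P where P: "P \<in> poly_fun_on (Inl ` {j<..n} \<union> Inr ` {j<..n})"
    "\<forall>x y. \<psi> j x y = P (case_sum x y)"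
    using psi_poly assms(1,2) by blast
  have "P (case_sum x y) = P (case_sum x' y')"
    by (rule poly_fun_on_cong[OF P(1)]) (use assms(3) in auto)
  thus ?thesis using P(2) by simp
qed

lemma psi_bipoly:
  assumes "1 \<le> j" "j < n" "\<And>i. X i \<in> bipoly" "\<And>i. Y i \<in> bipoly"
  shows "(\<lambda>u b. \<psi> j (\<lambda>i. X i u b) (\<lambda>i. Y i u b)) \<in> bipoly"
proof -
  obtain P where P: "P \<in> poly_fun_on (Inl ` {j<..n} \<union> Inr ` {j<..n})"
    "\<forall>x y. \<psi> j x y = P (case_sum x y)"
    using psi_poly assms(1,2) by blast
  have "(\<lambda>u b. P (\<lambda>v. (case_sum X Y) v u b)) \<in> bipoly"
    by (rule bipoly_subst[OF P(1)]) (auto split: sum.splits simp: assms)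
  moreover have "case_sum (\<lambda>i. X i u b) (\<lambda>i. Y i u b) = (\<lambda>v. (case_sum X Y) v u b)" for u b
    by (auto split: sum.splits)
  ultimately show ?thesis using P(2) by simp
qed

lemma elem3_bipoly:
  "a \<in> bipoly \<Longrightarrow> b \<in> bipoly \<Longrightarrow> t \<in> bipoly \<Longrightarrow> (\<lambda>x y. elem3 (a x y) (b x y) (t x y) i) \<in> bipoly"
  unfolding elem3_def
  by (cases "i = n - 2"; cases "i = n - 1"; cases "i = n") (use n3 in \<open>simp_all add: bipoly_const\<close>)

lemma gamma_bipoly: "s \<in> bipoly \<Longrightarrow> t \<in> bipoly \<Longrightarrow> (\<lambda>x y. \<gamma> (s x y) (t x y)) \<in> bipoly"
  unfolding \<gamma>_def using n3
  by (intro psi_bipoly[where X="\<lambda>i x y. elem3 0 0 (s x y) i"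
        and Y="\<lambda>i x y. elem3 0 0 (t x y) i", simplified])
     (auto intro!: elem3_bipoly bipoly_const)

lemma beta_bipoly: "b \<in> bipoly \<Longrightarrow> s \<in> bipoly \<Longrightarrow> b' \<in> bipoly \<Longrightarrow> t \<in> bipoly \<Longrightarrow>
   (\<lambda>x y. \<beta> (b x y) (s x y) (b' x y) (t x y)) \<in> bipoly"
  unfolding \<beta>_def using n3
  by (intro psi_bipoly[where X="\<lambda>i x y. elem3 0 (b x y) (s x y) i"
        and Y="\<lambda>i x y. elem3 0 (b' x y) (t x y) i", simplified])
     (auto intro!: elem3_bipoly bipoly_const)

lemma mult_coords:
  assumes "x \<in> Uset n" "y \<in> Uset n"
  shows "(x \<otimes>\<^bsub>G\<^esub> y) n = x n + y n"
    "(x \<otimes>\<^bsub>G\<^esub> y) (n - 1) = x (n - 1) + y (n - 1) + \<gamma> (x n) (y n)"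
    "(x \<otimes>\<^bsub>G\<^esub> y) (n - 2) = x (n - 2) + y (n - 2) + \<beta> (x (n - 1)) (x n) (y (n - 1)) (y n)"
proof -
  show "(x \<otimes>\<^bsub>G\<^esub> y) n = x n + y n" by (simp add: mult_G umult_def)
  have "\<psi> (n - 1) x y = \<gamma> (x n) (y n)" unfolding \<gamma>_def
  proof (intro psi_cong)
    fix i assume "n - 1 < i" "i \<le> n"
    hence "i = n" by auto
    thus "x i = elem3 0 0 (x n) i \<and> y i = elem3 0 0 (y n) i" by auto
  qed (use n3 in auto)
  thus "(x \<otimes>\<^bsub>G\<^esub> y) (n - 1) = x (n - 1) + y (n - 1) + \<gamma> (x n) (y n)"
    using n3 by (simp add: mult_G umult_def)
  have "\<psi> (n - 2) x y = \<beta> (x (n - 1)) (x n) (y (n - 1)) (y n)" unfolding \<beta>_def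
  proof (intro psi_cong)
    fix i assume "n - 2 < i" "i \<le> n"
    hence "i = n - 1 \<or> i = n" by auto
    thus "x i = elem3 0 (x (n - 1)) (x n) i \<and> y i = elem3 0 (y (n - 1)) (y n) i" by auto
  qed (use n3 in auto)
  thus "(x \<otimes>\<^bsub>G\<^esub> y) (n - 2) = x (n - 2) + y (n - 2) + \<beta> (x (n - 1)) (x n) (y (n - 1)) (y n)"
    using n3 by (simp add: mult_G umult_def)
qed

text \<open>Since \<open>0\<close> is the neutral element, \<open>\<gamma>\<close> vanishes when one factor is \<open>0\<close>.\<close>
lemma gamma_zero: "\<gamma> s 0 = 0" "\<gamma> 0 t = 0"
  using arg_cong[OF gr.r_one[of "elem3 0 0 s"], of "\<lambda>f. f (n - 1)"]
    arg_cong[OF gr.l_one[of "elem3 0 0 t"], of "\<lambda>f. f (n - 1)"]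
    mult_coords(2)[of "elem3 0 0 s" "elem3 0 0 0"] mult_coords(2)[of "elem3 0 0 0" "elem3 0 0 t"]
  by (simp_all add: elem3_zero)

text \<open>The inverse in the top three coordinates, solved from \<open>Y \<otimes> Y\<inverse> = 0\<close>.\<close>
lemma inv_coords:
  assumes Y: "Y \<in> Uset n"
  shows "(inv\<^bsub>G\<^esub> Y) n = - Y n"
    "(inv\<^bsub>G\<^esub> Y) (n - 1) = - Y (n - 1) - \<gamma> (Y n) (- Y n)"
    "(inv\<^bsub>G\<^esub> Y) (n - 2) = - Y (n - 2) - \<beta> (Y (n - 1)) (Y n) ((inv\<^bsub>G\<^esub> Y) (n - 1)) (- Y n)"
proof -
  have I: "inv\<^bsub>G\<^esub> Y \<in> Uset n" using Y by simp
  have c: "(Y \<otimes>\<^bsub>G\<^esub> inv\<^bsub>G\<^esub> Y) i = 0" for i using Y gr.r_inv by simp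
  show n: "(inv\<^bsub>G\<^esub> Y) n = - Y n"
    using c[of n] mult_coords(1)[OF Y I] by (simp add: eq_neg_iff_add_eq_0 add.commute)
  show "(inv\<^bsub>G\<^esub> Y) (n - 1) = - Y (n - 1) - \<gamma> (Y n) (- Y n)"
    using c[of "n - 1"] mult_coords(2)[OF Y I] n by (simp add: eq_neg_iff_add_eq_0 algebra_simps)
  show "(inv\<^bsub>G\<^esub> Y) (n - 2) = - Y (n - 2) - \<beta> (Y (n - 1)) (Y n) ((inv\<^bsub>G\<^esub> Y) (n - 1)) (- Y n)"
    using c[of "n - 2"] mult_coords(3)[OF Y I] n by (simp add: eq_neg_iff_add_eq_0 algebra_simps)
qed

text \<open>Conjugating an element \<open>g\<close> of \<open>U\<^sub>n\<^sub>-\<^sub>1\<close> by \<open>Y\<close> fixes the coordinates \<open>n - 1\<close>, \<open>n\<close>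
  and adds to the coordinate \<open>n - 2\<close> the correction \<open>conj_corr (Y\<^sub>n\<^sub>-\<^sub>1) (Y\<^sub>n) (g\<^sub>n\<^sub>-\<^sub>1)\<close>.\<close>
definition conj_corr :: "'k \<Rightarrow> 'k \<Rightarrow> 'k \<Rightarrow> 'k" where
  "conj_corr a s b = \<beta> a s b 0 - \<beta> a s (- a - \<gamma> s (- s)) (- s) + \<beta> (a + b) s (- a - \<gamma> s (- s)) (- s)"

lemma conj_coords:
  assumes Y: "Y \<in> Uset n" and g: "g \<in> Uset n" and gn: "g n = 0"
  shows "(Y \<otimes>\<^bsub>G\<^esub> g \<otimes>\<^bsub>G\<^esub> inv\<^bsub>G\<^esub> Y) n = 0"
    "(Y \<otimes>\<^bsub>G\<^esub> g \<otimes>\<^bsub>G\<^esub> inv\<^bsub>G\<^esub> Y) (n - 1) = g (n - 1)"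
    "(Y \<otimes>\<^bsub>G\<^esub> g \<otimes>\<^bsub>G\<^esub> inv\<^bsub>G\<^esub> Y) (n - 2) = g (n - 2) + conj_corr (Y (n - 1)) (Y n) (g (n - 1))"
proof -
  have I: "inv\<^bsub>G\<^esub> Y \<in> Uset n" using Y by simp
  have W: "Y \<otimes>\<^bsub>G\<^esub> g \<in> Uset n" using Y g by simp
  note mY = mult_coords[OF Y g] and mW = mult_coords[OF W I] and iY = inv_coords[OF Y]
  show "(Y \<otimes>\<^bsub>G\<^esub> g \<otimes>\<^bsub>G\<^esub> inv\<^bsub>G\<^esub> Y) n = 0" using mY mW iY gn by simp
  show "(Y \<otimes>\<^bsub>G\<^esub> g \<otimes>\<^bsub>G\<^esub> inv\<^bsub>G\<^esub> Y) (n - 1) = g (n - 1)"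
    using mY mW iY gn by (simp add: gamma_zero)
  have "(Y \<otimes>\<^bsub>G\<^esub> g \<otimes>\<^bsub>G\<^esub> inv\<^bsub>G\<^esub> Y) (n - 2) = (Y \<otimes>\<^bsub>G\<^esub> g) (n - 2) + (inv\<^bsub>G\<^esub> Y) (n - 2)
      + \<beta> ((Y \<otimes>\<^bsub>G\<^esub> g) (n - 1)) ((Y \<otimes>\<^bsub>G\<^esub> g) n) ((inv\<^bsub>G\<^esub> Y) (n - 1)) ((inv\<^bsub>G\<^esub> Y) n)"
    by (rule mW(3))
  also have "\<dots> = g (n - 2) + conj_corr (Y (n - 1)) (Y n) (g (n - 1))"
  proof -
    have w1: "(Y \<otimes>\<^bsub>G\<^esub> g) (n - 1) = Y (n - 1) + g (n - 1)"
      using mY(2) gn by (simp add: gamma_zero)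
    have w2: "(Y \<otimes>\<^bsub>G\<^esub> g) (n - 2) = Y (n - 2) + g (n - 2) + \<beta> (Y (n - 1)) (Y n) (g (n - 1)) 0"
      using mY(3) gn by simp
    show ?thesis
      unfolding w1 w2 iY(3) iY(2) mY(1) iY(1) gn conj_corr_def by (simp add: algebra_simps)
  qed
  finally show "(Y \<otimes>\<^bsub>G\<^esub> g \<otimes>\<^bsub>G\<^esub> inv\<^bsub>G\<^esub> Y) (n - 2) = g (n - 2) + conj_corr (Y (n - 1)) (Y n) (g (n - 1))" .
qed

text \<open>Congruence modulo \<open>U\<^sub>n\<^sub>-\<^sub>3\<close>: agreement in the top three coordinates.\<close>
definition top_eq :: "(nat \<Rightarrow> 'k) \<Rightarrow> (nat \<Rightarrow> 'k) \<Rightarrow> bool" where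
  "top_eq x y \<longleftrightarrow> x (n - 2) = y (n - 2) \<and> x (n - 1) = y (n - 1) \<and> x n = y n"

lemma top_eq_refl [simp]: "top_eq x x" and top_eq_sym: "top_eq x y \<Longrightarrow> top_eq y x"
  unfolding top_eq_def by simp_all

lemma top_eq_mult:
  assumes "x \<in> Uset n" "y \<in> Uset n" "x' \<in> Uset n" "y' \<in> Uset n" "top_eq x x'" "top_eq y y'"
  shows "top_eq (x \<otimes>\<^bsub>G\<^esub> y) (x' \<otimes>\<^bsub>G\<^esub> y')"
  using assms mult_coords[OF assms(1,2)] mult_coords[OF assms(3,4)] unfolding top_eq_def by simp

lemma Usub3_iff: "z \<in> Usub n (n - 3) \<longleftrightarrow> z \<in> Uset n \<and> top_eq z (\<lambda>_. 0)"
proof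
  assume "z \<in> Usub n (n - 3)"
  thus "z \<in> Uset n \<and> top_eq z (\<lambda>_. 0)" using n3 unfolding Usub_def top_eq_def by auto
next
  assume z: "z \<in> Uset n \<and> top_eq z (\<lambda>_. 0)"
  have "z j = 0" if "n - 3 < j" for j
  proof (cases "j \<le> n")
    case True
    hence "j = n - 2 \<or> j = n - 1 \<or> j = n" using that n3 by auto
    thus ?thesis using z unfolding top_eq_def by auto
  qed (use z in \<open>auto simp: Uset_def\<close>)
  thus "z \<in> Usub n (n - 3)" using z unfolding Usub_def by auto
qed

lemma Usub1_iff: "g \<in> Usub n (n - 1) \<longleftrightarrow> g \<in> Uset n \<and> g n = 0"
proof
  assume "g \<in> Uset n \<and> g n = 0"
  moreover have "g j = 0" if "g \<in> Uset n" "g n = 0" "n - 1 < j" for j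
    using that by (cases "j = n") (auto simp: Uset_def)
  ultimately show "g \<in> Usub n (n - 1)" by (auto simp: Usub_def)
qed (use n3 in \<open>auto simp: Usub_def\<close>)

lemma elem3_Usub2_iff: "elem3 0 b 0 \<in> Usub n (n - 2) \<longleftrightarrow> b = 0"
proof
  assume "elem3 0 b 0 \<in> Usub n (n - 2)"
  moreover have "n - 2 < n - 1" using n3 by simp
  ultimately have "elem3 0 b 0 (n - 1) = 0" unfolding Usub_def by blast
  thus "b = 0" by simp
qed (auto simp: Usub_def elem3_zero)

lemma inv_mult_Usub3_iff:
  assumes x: "x \<in> Uset n" and y: "y \<in> Uset n"
  shows "inv\<^bsub>G\<^esub> x \<otimes>\<^bsub>G\<^esub> y \<in> Usub n (n - 3) \<longleftrightarrow> top_eq x y"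
proof -
  have I: "inv\<^bsub>G\<^esub> x \<in> Uset n" and M: "inv\<^bsub>G\<^esub> x \<otimes>\<^bsub>G\<^esub> y \<in> Uset n" using x y by simp_all
  show ?thesis
  proof
    assume "inv\<^bsub>G\<^esub> x \<otimes>\<^bsub>G\<^esub> y \<in> Usub n (n - 3)"
    hence "top_eq (inv\<^bsub>G\<^esub> x \<otimes>\<^bsub>G\<^esub> y) (\<lambda>_. 0)" by (simp add: Usub3_iff)
    hence "top_eq (x \<otimes>\<^bsub>G\<^esub> (inv\<^bsub>G\<^esub> x \<otimes>\<^bsub>G\<^esub> y)) (x \<otimes>\<^bsub>G\<^esub> (\<lambda>_. 0))"
      by (rule top_eq_mult[OF x M x zero_Uset top_eq_refl])
    moreover have "x \<otimes>\<^bsub>G\<^esub> (inv\<^bsub>G\<^esub> x \<otimes>\<^bsub>G\<^esub> y) = y"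
      using x y I by (simp add: gr.m_assoc[symmetric])
    moreover have "x \<otimes>\<^bsub>G\<^esub> (\<lambda>_. 0) = x" using gr.r_one[of x] x by simp
    ultimately show "top_eq x y" using top_eq_sym by simp
  next
    assume "top_eq x y"
    hence "top_eq (inv\<^bsub>G\<^esub> x \<otimes>\<^bsub>G\<^esub> y) (inv\<^bsub>G\<^esub> x \<otimes>\<^bsub>G\<^esub> x)"
      by (rule top_eq_mult[OF I y I x top_eq_refl top_eq_sym])
    thus "inv\<^bsub>G\<^esub> x \<otimes>\<^bsub>G\<^esub> y \<in> Usub n (n - 3)" using x M gr.l_inv by (simp add: Usub3_iff)
  qed
qed

lemma commutator_Usub3_iff:
  assumes Y: "Y \<in> Uset n" and g: "g \<in> Uset n"
  shows "inv\<^bsub>G\<^esub> (Y \<otimes>\<^bsub>G\<^esub> g) \<otimes>\<^bsub>G\<^esub> (g \<otimes>\<^bsub>G\<^esub> Y) \<in> Usub n (n - 3)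
         \<longleftrightarrow> top_eq (Y \<otimes>\<^bsub>G\<^esub> g \<otimes>\<^bsub>G\<^esub> inv\<^bsub>G\<^esub> Y) g"
proof -
  have I: "inv\<^bsub>G\<^esub> Y \<in> Uset n" and Yg: "Y \<otimes>\<^bsub>G\<^esub> g \<in> Uset n" and gY: "g \<otimes>\<^bsub>G\<^esub> Y \<in> Uset n"
    and YgI: "Y \<otimes>\<^bsub>G\<^esub> g \<otimes>\<^bsub>G\<^esub> inv\<^bsub>G\<^esub> Y \<in> Uset n"
    using Y g by simp_all
  have "top_eq (Y \<otimes>\<^bsub>G\<^esub> g) (g \<otimes>\<^bsub>G\<^esub> Y) \<longleftrightarrow> top_eq (Y \<otimes>\<^bsub>G\<^esub> g \<otimes>\<^bsub>G\<^esub> inv\<^bsub>G\<^esub> Y) g"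
  proof
    assume "top_eq (Y \<otimes>\<^bsub>G\<^esub> g) (g \<otimes>\<^bsub>G\<^esub> Y)"
    hence "top_eq (Y \<otimes>\<^bsub>G\<^esub> g \<otimes>\<^bsub>G\<^esub> inv\<^bsub>G\<^esub> Y) (g \<otimes>\<^bsub>G\<^esub> Y \<otimes>\<^bsub>G\<^esub> inv\<^bsub>G\<^esub> Y)"
      by (rule top_eq_mult[OF Yg I gY I _ top_eq_refl])
    moreover have "g \<otimes>\<^bsub>G\<^esub> Y \<otimes>\<^bsub>G\<^esub> inv\<^bsub>G\<^esub> Y = g"
      using Y g I by (simp add: gr.m_assoc gr.r_inv gr.r_one del: one_G)
    ultimately show "top_eq (Y \<otimes>\<^bsub>G\<^esub> g \<otimes>\<^bsub>G\<^esub> inv\<^bsub>G\<^esub> Y) g" by simp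
  next
    assume "top_eq (Y \<otimes>\<^bsub>G\<^esub> g \<otimes>\<^bsub>G\<^esub> inv\<^bsub>G\<^esub> Y) g"
    hence "top_eq (Y \<otimes>\<^bsub>G\<^esub> g \<otimes>\<^bsub>G\<^esub> inv\<^bsub>G\<^esub> Y \<otimes>\<^bsub>G\<^esub> Y) (g \<otimes>\<^bsub>G\<^esub> Y)"
      by (rule top_eq_mult[OF YgI Y g Y _ top_eq_refl])
    moreover have "Y \<otimes>\<^bsub>G\<^esub> g \<otimes>\<^bsub>G\<^esub> inv\<^bsub>G\<^esub> Y \<otimes>\<^bsub>G\<^esub> Y = Y \<otimes>\<^bsub>G\<^esub> g"
      using Y g I by (simp add: gr.m_assoc gr.l_inv gr.r_one del: one_G)
    ultimately show "top_eq (Y \<otimes>\<^bsub>G\<^esub> g) (g \<otimes>\<^bsub>G\<^esub> Y)" by simp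
  qed
  thus ?thesis using inv_mult_Usub3_iff[OF Yg gY] by simp
qed

text \<open>Conjugation by \<open>Y\<close> is an automorphism, so its correction term is additive in \<open>b\<close>.\<close>
lemma conj_corr_add: "conj_corr a s (b + b') = conj_corr a s b + conj_corr a s b'"
proof -
  define Y where "Y = elem3 0 a s"
  have Y: "Y \<in> Uset n" "Y (n - 1) = a" "Y n = s" by (simp_all add: Y_def)
  define g1 g2 where "g1 = elem3 0 b 0" and "g2 = elem3 0 b' 0"
  have g: "g1 \<in> Uset n" "g2 \<in> Uset n" by (simp_all add: g1_def g2_def)
  define P where "P = g1 \<otimes>\<^bsub>G\<^esub> g2"
  have P: "P \<in> Uset n" "P n = 0" "P (n - 1) = b + b'" "P (n - 2) = \<beta> b 0 b' 0"
    using mult_coords[OF g] by (simp_all add: P_def g1_def g2_def gamma_zero)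
  define C1 C2 where "C1 = Y \<otimes>\<^bsub>G\<^esub> g1 \<otimes>\<^bsub>G\<^esub> inv\<^bsub>G\<^esub> Y" and "C2 = Y \<otimes>\<^bsub>G\<^esub> g2 \<otimes>\<^bsub>G\<^esub> inv\<^bsub>G\<^esub> Y"
  have "Y \<otimes>\<^bsub>G\<^esub> P \<otimes>\<^bsub>G\<^esub> inv\<^bsub>G\<^esub> Y = C1 \<otimes>\<^bsub>G\<^esub> C2"
    unfolding P_def C1_def C2_def using Y g by (intro gr.conj_mult) auto
  moreover have "(Y \<otimes>\<^bsub>G\<^esub> P \<otimes>\<^bsub>G\<^esub> inv\<^bsub>G\<^esub> Y) (n - 2) = \<beta> b 0 b' 0 + conj_corr a s (b + b')"
    using conj_coords(3)[OF Y(1) P(1,2)] P Y by simp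
  moreover have "(C1 \<otimes>\<^bsub>G\<^esub> C2) (n - 2) = conj_corr a s b + conj_corr a s b' + \<beta> b 0 b' 0"
    using mult_coords(3)[of C1 C2] conj_coords[OF Y(1) g(1)] conj_coords[OF Y(1) g(2)] Y g
    by (simp add: C1_def C2_def g1_def g2_def)
  ultimately show ?thesis by (simp add: algebra_simps)
qed

text \<open>Conjugation by the neutral element adds nothing.\<close>
lemma conj_corr_neutral: "conj_corr 0 0 b = 0"
proof -
  have "\<one>\<^bsub>G\<^esub> \<otimes>\<^bsub>G\<^esub> elem3 0 b 0 \<otimes>\<^bsub>G\<^esub> inv\<^bsub>G\<^esub> \<one>\<^bsub>G\<^esub> = elem3 0 b 0" by (simp del: one_G)
  thus ?thesis using conj_coords(3)[of "\<one>\<^bsub>G\<^esub>" "elem3 0 b 0"] by simp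
qed

text \<open>An element commutes with itself: \<open>(0, b, 0)\<close> conjugated by itself is unchanged.\<close>
lemma conj_corr_self: "conj_corr b 0 b = 0"
proof -
  define g where "g = elem3 0 b 0"
  have g: "g \<in> Uset n" by (simp add: g_def)
  have "g \<otimes>\<^bsub>G\<^esub> g \<otimes>\<^bsub>G\<^esub> inv\<^bsub>G\<^esub> g = g"
    using g by (simp add: gr.m_assoc gr.r_inv gr.r_one del: one_G)
  thus ?thesis using conj_coords(3)[OF g g] by (simp add: g_def)
qed

text \<open>Conjugation by \<open>(0, \<dots>, 0, u + u')\<close> and by the product of \<open>(0, \<dots>, 0, u)\<close> and
  \<open>(0, \<dots>, 0, u')\<close> differ by conjugation with an element \<open>Z\<close> of \<open>U\<^sub>n\<^sub>-\<^sub>1\<close>, whose correction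
  only depends on \<open>t = Z\<^sub>n\<^sub>-\<^sub>1\<close>.\<close>
lemma conj_corr_cocycle:
  "\<exists>t. \<forall>b. conj_corr 0 u b + conj_corr 0 u' b = conj_corr 0 (u + u') b + conj_corr t 0 b"
proof -
  define V where "V u = elem3 0 0 u" for u
  have V: "V u \<in> Uset n" "V u (n - 1) = 0" "V u n = u" for u by (simp_all add: V_def)
  define Z where "Z = inv\<^bsub>G\<^esub> (V (u + u')) \<otimes>\<^bsub>G\<^esub> (V u \<otimes>\<^bsub>G\<^esub> V u')"
  have Z: "Z \<in> Uset n" "Z n = 0"
    using mult_coords(1)[of "inv\<^bsub>G\<^esub> (V (u + u'))" "V u \<otimes>\<^bsub>G\<^esub> V u'"]
      mult_coords(1)[of "V u" "V u'"] inv_coords(1)[of "V (u + u')"] V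
    by (simp_all add: Z_def)
  have VZ: "V (u + u') \<otimes>\<^bsub>G\<^esub> Z = V u \<otimes>\<^bsub>G\<^esub> V u'"
    unfolding Z_def using V by (simp add: gr.m_assoc[symmetric] gr.r_inv gr.l_one del: one_G)
  have "conj_corr 0 u b + conj_corr 0 u' b = conj_corr 0 (u + u') b + conj_corr (Z (n - 1)) 0 b" for b
  proof -
    define g where "g = elem3 0 b 0"
    have g: "g \<in> Uset n" "g n = 0" "g (n - 1) = b" "g (n - 2) = 0" by (simp_all add: g_def)
    define C' C'' where "C' = V u' \<otimes>\<^bsub>G\<^esub> g \<otimes>\<^bsub>G\<^esub> inv\<^bsub>G\<^esub> (V u')"
      and "C'' = Z \<otimes>\<^bsub>G\<^esub> g \<otimes>\<^bsub>G\<^esub> inv\<^bsub>G\<^esub> Z"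
    have C': "C' \<in> Uset n" "C' n = 0" "C' (n - 1) = b" "C' (n - 2) = conj_corr 0 u' b"
      using conj_coords[OF V(1) g(1,2), of u'] V g by (simp_all add: C'_def)
    have C'': "C'' \<in> Uset n" "C'' n = 0" "C'' (n - 1) = b" "C'' (n - 2) = conj_corr (Z (n - 1)) 0 b"
      using conj_coords[OF Z(1) g(1,2)] Z g by (simp_all add: C''_def)
    have "V u \<otimes>\<^bsub>G\<^esub> C' \<otimes>\<^bsub>G\<^esub> inv\<^bsub>G\<^esub> (V u) = V (u + u') \<otimes>\<^bsub>G\<^esub> C'' \<otimes>\<^bsub>G\<^esub> inv\<^bsub>G\<^esub> (V (u + u'))"
      using gr.conj_comp[of "V u" "V u'" g] gr.conj_comp[of "V (u + u')" Z g] V Z g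
      by (simp add: C'_def C''_def VZ)
    moreover have "(V u \<otimes>\<^bsub>G\<^esub> C' \<otimes>\<^bsub>G\<^esub> inv\<^bsub>G\<^esub> (V u)) (n - 2) = conj_corr 0 u' b + conj_corr 0 u b"
      using conj_coords(3)[OF V(1) C'(1,2), of u] C' V by simp
    moreover have "(V (u + u') \<otimes>\<^bsub>G\<^esub> C'' \<otimes>\<^bsub>G\<^esub> inv\<^bsub>G\<^esub> (V (u + u'))) (n - 2)
        = conj_corr (Z (n - 1)) 0 b + conj_corr 0 (u + u') b"
      using conj_coords(3)[OF V(1) C''(1,2), of "u + u'"] C'' V by simp
    ultimately show ?thesis by (simp add: algebra_simps)
  qed
  thus ?thesis by blast
qed

lemma conj_corr_last_bipoly: "(\<lambda>u b. conj_corr 0 u b) \<in> bipoly"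
proof -
  have m: "(\<lambda>u (b::'k). - u) \<in> bipoly" using bipoly_uminus[OF bipoly_fst] by simp
  have g: "(\<lambda>u (b::'k). - 0 - \<gamma> u (- u)) \<in> bipoly"
    using bipoly_uminus[OF gamma_bipoly[OF bipoly_fst m]] by simp
  have 1: "(\<lambda>u b. \<beta> 0 u b 0) \<in> bipoly"
    using beta_bipoly[OF bipoly_const bipoly_fst bipoly_snd bipoly_const] by simp
  have 2: "(\<lambda>u b. \<beta> 0 u (- 0 - \<gamma> u (- u)) (- u)) \<in> bipoly"
    using beta_bipoly[OF bipoly_const bipoly_fst g m] by simp
  have 3: "(\<lambda>u b. \<beta> (0 + b) u (- 0 - \<gamma> u (- u)) (- u)) \<in> bipoly"
    using beta_bipoly[OF bipoly_snd bipoly_fst g m] by simp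
  show ?thesis using bipoly_add[OF bipoly_diff[OF 1 2] 3] by (simp add: conj_corr_def)
qed

lemma conj_corr_mid_bipoly: "(\<lambda>t b. conj_corr t 0 b) \<in> bipoly"
proof -
  have m: "(\<lambda>t (b::'k). - t) \<in> bipoly" using bipoly_uminus[OF bipoly_fst] by simp
  have s: "(\<lambda>t (b::'k). t + b) \<in> bipoly" using bipoly_add[OF bipoly_fst bipoly_snd] by simp
  have 1: "(\<lambda>t b. \<beta> t 0 b 0) \<in> bipoly"
    using beta_bipoly[OF bipoly_fst bipoly_const bipoly_snd bipoly_const] by simp
  have 2: "(\<lambda>t b. \<beta> t 0 (- t) 0) \<in> bipoly"
    using beta_bipoly[OF bipoly_fst bipoly_const m bipoly_const] by simp
  have 3: "(\<lambda>t b. \<beta> (t + b) 0 (- t) 0) \<in> bipoly"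
    using beta_bipoly[OF s bipoly_const m bipoly_const] by simp
  show ?thesis using bipoly_add[OF bipoly_diff[OF 1 2] 3] by (simp add: conj_corr_def gamma_zero)
qed

text \<open>The centraliser hypothesis says exactly that, for \<open>u \<noteq> 0\<close>, conjugation by
  \<open>(0, \<dots>, 0, u)\<close> fixes \<open>(0, b, 0)\<close> modulo \<open>U\<^sub>n\<^sub>-\<^sub>3\<close> only for \<open>b = 0\<close>.\<close>
lemma conj_corr_last_roots:
  assumes centralizer: "\<forall>u::'k. u \<noteq> 0 \<longrightarrow> (\<forall>g \<in> Usub n (n - 1).
        (inv\<^bsub>G\<^esub> (vlast n u \<otimes>\<^bsub>G\<^esub> g) \<otimes>\<^bsub>G\<^esub> (g \<otimes>\<^bsub>G\<^esub> vlast n u) \<in> Usub n (n - 3))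
        \<longleftrightarrow> g \<in> Usub n (n - 2))"
    and "u \<noteq> 0"
  shows "conj_corr 0 u b = 0 \<longleftrightarrow> b = 0"
proof -
  define g where "g = elem3 0 b 0"
  have g: "g \<in> Uset n" "g n = 0" by (simp_all add: g_def)
  hence "g \<in> Usub n (n - 1)" using Usub1_iff by blast
  hence "b = 0 \<longleftrightarrow> inv\<^bsub>G\<^esub> (vlast n u \<otimes>\<^bsub>G\<^esub> g) \<otimes>\<^bsub>G\<^esub> (g \<otimes>\<^bsub>G\<^esub> vlast n u) \<in> Usub n (n - 3)"
    using centralizer \<open>u \<noteq> 0\<close> elem3_Usub2_iff[of b] by (simp add: g_def)
  also have "\<dots> \<longleftrightarrow> top_eq (vlast n u \<otimes>\<^bsub>G\<^esub> g \<otimes>\<^bsub>G\<^esub> inv\<^bsub>G\<^esub> (vlast n u)) g"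
    using g by (intro commutator_Usub3_iff) (simp_all add: vlast_elem3)
  also have "\<dots> \<longleftrightarrow> conj_corr 0 u b = 0"
    using conj_coords[OF _ g, of "vlast n u"] unfolding top_eq_def by (simp add: vlast_elem3 g_def)
  finally show ?thesis by simp
qed

lemma conj_vlast_mod_Usub3:
  assumes form: "\<And>u b. conj_corr 0 u b = c * u ^ h * b ^ k"
    and g: "g \<in> Usub n (n - 1)"
  shows "inv\<^bsub>G\<^esub> (g(n - 2 := g (n - 2) + c * u ^ h * g (n - 1) ^ k))
          \<otimes>\<^bsub>G\<^esub> (vlast n u \<otimes>\<^bsub>G\<^esub> g \<otimes>\<^bsub>G\<^esub> inv\<^bsub>G\<^esub> (vlast n u)) \<in> Usub n (n - 3)"
proof -
  have gC: "g \<in> Uset n" "g n = 0" using g Usub1_iff by auto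
  have "g(n - 2 := g (n - 2) + c * u ^ h * g (n - 1) ^ k) \<in> Uset n"
    using gC n3 by (auto simp: Uset_def)
  moreover have "n - Suc 0 \<noteq> n - 2" "n \<noteq> n - 2" using n3 by auto
  hence "top_eq (g(n - 2 := g (n - 2) + c * u ^ h * g (n - 1) ^ k))
                (vlast n u \<otimes>\<^bsub>G\<^esub> g \<otimes>\<^bsub>G\<^esub> inv\<^bsub>G\<^esub> (vlast n u))"
    using conj_coords[OF _ gC, of "vlast n u"] form[of u "g (n - 1)"] gC(2)
    unfolding top_eq_def by (simp add: vlast_elem3)
  ultimately show ?thesis using gC by (simp add: inv_mult_Usub3_iff vlast_elem3)
qed

end

theorem mainTheorem9:
  fixes n :: nat
    and \<psi> :: "nat \<Rightarrow> (nat \<Rightarrow> 'k::alg_closed_field) \<Rightarrow> (nat \<Rightarrow> 'k) \<Rightarrow> 'k"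
    and e :: "nat \<Rightarrow> int"
    and \<phi> :: "nat \<Rightarrow> 'k \<Rightarrow> (nat \<Rightarrow> 'k) \<Rightarrow> 'k"
  assumes n3: "n \<ge> 3"
    and psi_poly: "\<forall>j. 1 \<le> j \<and> j < n \<longrightarrow>
        (\<exists>P \<in> poly_fun_on (Inl ` {j<..n} \<union> Inr ` {j<..n}).
           \<forall>x y. \<psi> j x y = P (case_sum x y))"
    and grp: "group (Ugrp n \<psi>)"
    and normal_U: "\<forall>i \<le> n. Usub n i \<lhd> Ugrp n \<psi>"
    and phi_poly: "\<forall>j. 1 \<le> j \<and> j < n \<longrightarrow>
        (\<exists>P \<in> poly_fun_on (Inl ` {True, False} \<union> Inr ` {j<..n}).
           \<forall>\<tau> x. \<tau> \<noteq> 0 \<longrightarrow> \<phi> j \<tau> x = P (case_sum (\<lambda>b. if b then \<tau> else inverse \<tau>) x))"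
    and act_aut: "\<forall>\<tau>. \<tau> \<noteq> 0 \<longrightarrow> Tact n e \<phi> \<tau> \<in> iso (Ugrp n \<psi>) (Ugrp n \<psi>)"
    and act_one: "\<forall>x \<in> Uset n. Tact n e \<phi> 1 x = x"
    and act_mult: "\<forall>s t. s \<noteq> 0 \<longrightarrow> t \<noteq> 0 \<longrightarrow>
        (\<forall>x \<in> Uset n. Tact n e \<phi> (s * t) x = Tact n e \<phi> s (Tact n e \<phi> t x))"
    and act_normal: "\<forall>\<tau> i. \<tau> \<noteq> 0 \<longrightarrow> i \<le> n \<longrightarrow> Tact n e \<phi> \<tau> ` Usub n i \<subseteq> Usub n i"
    and centralizer: "\<forall>u::'k. u \<noteq> 0 \<longrightarrow> (\<forall>g \<in> Usub n (n - 1).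
        (inv\<^bsub>Ugrp n \<psi>\<^esub> (vlast n u \<otimes>\<^bsub>Ugrp n \<psi>\<^esub> g) \<otimes>\<^bsub>Ugrp n \<psi>\<^esub> (g \<otimes>\<^bsub>Ugrp n \<psi>\<^esub> vlast n u)
           \<in> Usub n (n - 3)) \<longleftrightarrow> g \<in> Usub n (n - 2))"
  shows "\<exists>c::'k. c \<noteq> 0 \<and> (\<exists>h k::nat.
     (if CHAR('k) > 0 then (\<exists>a. h = CHAR('k) ^ a) \<and> (\<exists>b. k = CHAR('k) ^ b) else h = 1 \<and> k = 1) \<and>
     (\<forall>u::'k. \<forall>g \<in> Usub n (n - 1).
        inv\<^bsub>Ugrp n \<psi>\<^esub> (g(n - 2 := g (n - 2) + c * u ^ h * g (n - 1) ^ k))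
          \<otimes>\<^bsub>Ugrp n \<psi>\<^esub> (vlast n u \<otimes>\<^bsub>Ugrp n \<psi>\<^esub> g \<otimes>\<^bsub>Ugrp n \<psi>\<^esub> inv\<^bsub>Ugrp n \<psi>\<^esub> (vlast n u))
        \<in> Usub n (n - 3)))"
proof -
  interpret unipotent_coords n \<psi> by (rule unipotent_coords.intro[OF n3 psi_poly grp])
  obtain c h k where "c \<noteq> 0"
    and exponents: "if CHAR('k) > 0 then (\<exists>a. h = CHAR('k) ^ a) \<and> (\<exists>a. k = CHAR('k) ^ a)
                    else h = 1 \<and> k = 1"
    and form: "\<forall>u b. conj_corr 0 u b = c * u ^ h * b ^ k"
    using bipoly_additive_form[OF conj_corr_last_bipoly conj_corr_mid_bipoly conj_corr_add
        conj_corr_last_roots[OF centralizer] conj_corr_neutral conj_corr_cocycle conj_corr_self]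
    by blast
  have "\<forall>u. \<forall>g \<in> Usub n (n - 1).
      inv\<^bsub>G\<^esub> (g(n - 2 := g (n - 2) + c * u ^ h * g (n - 1) ^ k))
        \<otimes>\<^bsub>G\<^esub> (vlast n u \<otimes>\<^bsub>G\<^esub> g \<otimes>\<^bsub>G\<^esub> inv\<^bsub>G\<^esub> (vlast n u)) \<in> Usub n (n - 3)"
    using conj_vlast_mod_Usub3 form by blast
  thus ?thesis using \<open>c \<noteq> 0\<close> exponents by blast
qed

end
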